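(* Let $g_1,g_2$ be independent exponential random variables with means $\varepsilon_1,\varepsilon_2>0$. Fix rates $R_d>R_s\ge 0$ and $\rho\ge 0$, let $SNR=P_s/\sigma^2$ and $INR=P_d/\sigma^2=SNR^\rho$. Define the events $$E_o^{\mathrm{MF}}=\Big\{\tfrac12\log_2\!\Big(\tfrac12+SNR\tfrac{g_1g_2}{g_1+g_2}\Big)<R_d\Big\},\quad E_o^{\mathrm{cs}}=\Big\{\tfrac12\log_2\!\big(1+\min\{g_1,g_2\}SNR\big)<R_d\Big\},$$ $$E_l=\Big\{\tfrac12\log_2\!\Big(1+\tfrac{g_1\,SNR}{g_2\,INR+1}\Big)>R_d-R_s\Big\},$$ and the total outage probabilities $p_t^{\mathrm{MF}}=\Pr(E_o^{\mathrm{MF}}\cup E_l)$ and $p_t^{\mathrm{cs}}=\Pr(E_o^{\mathrm{cs}}\cup E_l)$. Then $$\limsup_{SNR\to\infty}\frac{-\log p_t^{\mathrm{MF}}}{\log SNR}=\limsup_{SNR\to\infty}\frac{-\log p_t^{\mathrm{cs}}}{\log SNR}=\begin{cases}0,&\rho\le 1,\\ \rho-1,&1<\rho\le 2,\\ 1,&\rho>2.\end{cases}$$ That is, the modulo-and-forward scheme achieves the full generalized secure diversity gain (the one given by the cut-set bound).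
   Context: Untrusted relay channel without channel state information at the transmitter: $h_i\sim\mathcal{CN}(0,\varepsilon_i)$, $g_i=|h_i|^2$ ($g_1$: source–relay, $g_2$: destination–relay and relay–destination). $P_s$ is the source/relay power, $P_d$ the destination's artificial-noise power, $\sigma^2$ the noise variance. $R_d$ is the total (confidential plus randomization) transmission rate and $R_s$ the confidential rate. $E_o^{\mathrm{MF}}$ is connection outage of the modulo-and-forward scheme, $E_o^{\mathrm{cs}}$ is connection outage for the cut-set upper bound on end-to-end capacity (valid for any relay processing), and $E_l$ is secrecy outage at the untrusted relay. The generalized secure diversity gain is $\limsup_{SNR\to\infty}(-\log p_t)/\log SNR$ with $INR=SNR^\rho$. *)

theory Defs
  imports "HOL-Probability.Probability"
begin

definition E_o_MF :: "real \<Rightarrow> real \<Rightarrow> real \<Rightarrow> real \<Rightarrow> bool" where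
  "E_o_MF Rd snr g1 g2 \<longleftrightarrow> (1/2) * log 2 (1/2 + snr * (g1 * g2 / (g1 + g2))) < Rd"

definition E_o_cs :: "real \<Rightarrow> real \<Rightarrow> real \<Rightarrow> real \<Rightarrow> bool" where
  "E_o_cs Rd snr g1 g2 \<longleftrightarrow> (1/2) * log 2 (1 + min g1 g2 * snr) < Rd"

definition E_l :: "real \<Rightarrow> real \<Rightarrow> real \<Rightarrow> real \<Rightarrow> real \<Rightarrow> real \<Rightarrow> bool" where
  "E_l Rd Rs snr inr g1 g2 \<longleftrightarrow> (1/2) * log 2 (1 + g1 * snr / (g2 * inr + 1)) > Rd - Rs"

definition gsdg :: "real \<Rightarrow> real" where
  "gsdg \<rho> = (if \<rho> \<le> 1 then 0 else if \<rho> \<le> 2 then \<rho> - 1 else 1)"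

end

theory Submission
  imports Defs "HOL-Real_Asymp.Real_Asymp"
begin

text \<open>
  Put \<open>a = 2 powr (2 (Rd - Rs)) - 1\<close>. Secrecy outage is the event \<open>a (g2 INR + 1) < g1 SNR\<close>,
  and both connection-outage events lie between \<open>{g1 < k/SNR}\<close> and \<open>{min g1 g2 < k'/SNR}\<close>.
  So the total outage probability is at least \<open>P(g1 \<le> k/(2 SNR)) \<approx> 1/SNR\<close>, and at least
  \<open>P(g1 > 2a) P(g2 \<le> SNR^(1-\<rho>)) \<approx> min 1 (SNR^(1-\<rho>))\<close> because then the jamming cannot
  hide the source from the relay. Conversely, splitting on \<open>g2 \<le> u\<close> bounds it by
  \<open>O(1/SNR) + O(u) + exp (-a u SNR^(\<rho>-1) / \<epsilon>1)\<close>, and \<open>u \<approx> SNR^(1-\<rho>) log SNR\<close> makes this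
  \<open>O(SNR^(-min 1 (\<rho>-1)) log SNR)\<close>. The two bounds agree up to a logarithmic factor, so
  \<open>-log p / log SNR\<close> converges to the diversity gain, for either scheme.
\<close>

lemma exp_one_leD:
  fixes s :: real
  assumes "exp 1 \<le> s"
  shows "1 \<le> s" and "1 \<le> ln s"
  using assms order.trans[OF one_le_exp_iff[THEN iffD2] assms] ln_ge_iff[of s 1] by auto

lemma Limsup_neg_ln_div_ln_eqI:
  fixes p :: "real \<Rightarrow> real" and d c C :: real
  assumes "c > 0" and "C > 0"
    and bounds: "\<forall>\<^sub>F s in at_top. c * s powr (-d) \<le> p s \<and> p s \<le> C * s powr (-d) * ln s"
  shows "Limsup at_top (\<lambda>s. ereal (- ln (p s) / ln s)) = ereal d"
proof -
  have sandwich: "\<forall>\<^sub>F s in at_top. d - ln C / ln s - ln (ln s) / ln s \<le> - ln (p s) / ln s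
        \<and> - ln (p s) / ln s \<le> d - ln c / ln s"
    using bounds eventually_ge_at_top[of "exp 1"]
  proof eventually_elim
    case (elim s)
    then have "0 < s" and ln_s: "1 \<le> ln s"
      using exp_one_leD[of s] by auto
    have "0 < c * s powr (-d)" using \<open>c > 0\<close> \<open>0 < s\<close> by simp
    with elim have "0 < p s" by linarith
    have "ln c - d * ln s \<le> ln (p s)"
      using elim \<open>0 < p s\<close> \<open>c > 0\<close> \<open>0 < s\<close> ln_mono[of "c * s powr (-d)" "p s"]
      by (simp add: ln_mult ln_powr)
    moreover have "ln (C * s powr (-d) * ln s) = ln C - d * ln s + ln (ln s)"
      using \<open>C > 0\<close> \<open>0 < s\<close> ln_s by (auto simp: ln_mult ln_powr)
    then have "ln (p s) \<le> ln C - d * ln s + ln (ln s)"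
      using elim \<open>0 < p s\<close> ln_mono[of "p s" "C * s powr (-d) * ln s"] by simp
    ultimately have "- ln (p s) / ln s \<le> (d * ln s - ln c) / ln s"
      and "(d * ln s - ln C - ln (ln s)) / ln s \<le> - ln (p s) / ln s"
      using ln_s by (intro divide_right_mono; simp)+
    with ln_s show ?case by (simp add: diff_divide_distrib)
  qed
  have "((\<lambda>s. - ln (p s) / ln s) \<longlongrightarrow> d) at_top"
  proof (rule tendsto_sandwich)
    show "((\<lambda>s. d - ln C / ln s - ln (ln s) / ln s) \<longlongrightarrow> d) at_top" by real_asymp
    show "((\<lambda>s. d - ln c / ln s) \<longlongrightarrow> d) at_top" by real_asymp
  qed (use sandwich in \<open>auto elim: eventually_mono\<close>)
  then show ?thesis
    by (intro lim_imp_Limsup tendsto_ereal) simp_all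
qed

lemma powr_neg_le_powr_neg_mult_ln:
  fixes s d e :: real
  assumes "exp 1 \<le> s" and "d \<le> e"
  shows "s powr (-e) \<le> s powr (-d) * ln s"
proof -
  have "1 \<le> s" and "1 \<le> ln s"
    using exp_one_leD[OF assms(1)] .
  then have "s powr (-e) \<le> s powr (-d)" using assms(2) by (intro powr_mono) auto
  also have "\<dots> \<le> s powr (-d) * ln s" using \<open>1 \<le> ln s\<close> by (simp add: mult_le_cancel_left1)
  finally show ?thesis .
qed

lemma linear_le_one_minus_exp_neg:
  fixes y Y :: real
  assumes "0 \<le> y" and "y \<le> Y"
  shows "y / (1 + Y) \<le> 1 - exp (- y)"
proof -
  have "y / (1 + Y) \<le> y / (1 + y)" using assms by (intro divide_left_mono) auto
  also have "\<dots> = 1 - 1 / (1 + y)" using assms by (simp add: field_simps)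
  also have "\<dots> \<le> 1 - exp (- y)"
    using exp_ge_add_one_self[of y] assms by (simp add: exp_minus field_simps)
  finally show ?thesis .
qed

lemma prod_div_sum_le_left:
  fixes g1 g2 :: real
  assumes "0 \<le> g1" and "0 \<le> g2"
  shows "g1 * g2 / (g1 + g2) \<le> g1"
  using assms by (cases "g1 + g2 = 0") (simp_all add: divide_le_eq mult_left_mono)

lemma min_le_two_prod_div_sum:
  fixes g1 g2 :: real
  assumes "0 \<le> g1" and "0 \<le> g2"
  shows "min g1 g2 \<le> 2 * (g1 * g2 / (g1 + g2))"
proof (cases "g1 + g2 = 0")
  case False
  then have "0 < g1 + g2" using assms by simp
  have "min g1 g2 * (g1 + g2) \<le> g2 * g1 + g1 * g2"
    unfolding distrib_left using assms by (intro add_mono mult_right_mono) auto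
  with \<open>0 < g1 + g2\<close> show ?thesis by (simp add: le_divide_eq mult.commute)
qed (use assms in simp)

definition secrecy_threshold :: "real \<Rightarrow> real \<Rightarrow> real" where
  "secrecy_threshold Rd Rs = 2 powr (2 * (Rd - Rs)) - 1"

lemma secrecy_threshold_pos: "Rs < Rd \<Longrightarrow> 0 < secrecy_threshold Rd Rs"
  unfolding secrecy_threshold_def using gr_one_powr[of 2 "2 * (Rd - Rs)"] by simp

lemma E_l_iff:
  assumes "0 < snr" and "0 \<le> g1" and "0 \<le> g2" and "0 \<le> inr"
  shows "E_l Rd Rs snr inr g1 g2 \<longleftrightarrow> secrecy_threshold Rd Rs * (g2 * inr + 1) < g1 * snr"
proof -
  have "0 < g2 * inr + 1" using assms by (simp add: add_nonneg_pos)
  moreover have "0 < 1 + g1 * snr / (g2 * inr + 1)"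
    using assms calculation by (simp add: add_pos_nonneg)
  ultimately have "E_l Rd Rs snr inr g1 g2 \<longleftrightarrow> 2 powr (2 * (Rd - Rs)) < 1 + g1 * snr / (g2 * inr + 1)"
    unfolding E_l_def by (simp add: less_log_iff[symmetric] algebra_simps)
  also have "\<dots> \<longleftrightarrow> secrecy_threshold Rd Rs * (g2 * inr + 1) < g1 * snr"
    using \<open>0 < g2 * inr + 1\<close> unfolding secrecy_threshold_def by (simp add: field_simps)
  finally show ?thesis .
qed

lemma E_o_cs_iff:
  assumes "0 < snr" and "0 \<le> g1" and "0 \<le> g2"
  shows "E_o_cs Rd snr g1 g2 \<longleftrightarrow> min g1 g2 * snr < 2 powr (2 * Rd) - 1"
proof -
  have "0 < 1 + min g1 g2 * snr" using assms by (simp add: add_pos_nonneg)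
  then show ?thesis unfolding E_o_cs_def by (simp add: log_less_iff field_simps)
qed

lemma E_o_MF_iff:
  assumes "0 < snr" and "0 \<le> g1" and "0 \<le> g2"
  shows "E_o_MF Rd snr g1 g2 \<longleftrightarrow> snr * (g1 * g2 / (g1 + g2)) < 2 powr (2 * Rd) - 1/2"
proof -
  have "0 < 1/2 + snr * (g1 * g2 / (g1 + g2))" using assms by (simp add: add_pos_nonneg)
  then show ?thesis unfolding E_o_MF_def by (simp add: log_less_iff field_simps)
qed

lemma E_l_if_gains_separated:
  assumes "Rs < Rd" and "1 \<le> s" and "0 \<le> g2" and "g2 \<le> s powr (1 - \<rho>)"
    and "2 * secrecy_threshold Rd Rs < g1"
  shows "E_l Rd Rs s (s powr \<rho>) g1 g2"
proof -
  define a where "a = secrecy_threshold Rd Rs"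
  have "0 < a" unfolding a_def using secrecy_threshold_pos[OF assms(1)] .
  have "g2 * s powr \<rho> \<le> s powr (1 - \<rho>) * s powr \<rho>"
    using assms(4) by (intro mult_right_mono) auto
  also have "\<dots> = s" using assms(2) by (simp add: powr_add[symmetric])
  finally have "a * (g2 * s powr \<rho> + 1) \<le> a * (s + 1)" using \<open>0 < a\<close> by simp
  also have "\<dots> \<le> 2 * a * s" using assms(2) \<open>0 < a\<close> by (simp add: algebra_simps)
  also have "\<dots> < g1 * s" using assms(2,5) unfolding a_def by simp
  finally show ?thesis
    using E_l_iff[of s g1 g2 "s powr \<rho>"] assms(2,3,5) secrecy_threshold_pos[OF assms(1)]
    unfolding a_def by simp
qed

lemma source_gain_large_if_E_l:
  assumes "Rs < Rd" and "0 < s" and "0 \<le> g1" and "0 \<le> u" and "u < g2"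
    and "E_l Rd Rs s (s powr \<rho>) g1 g2"
  shows "secrecy_threshold Rd Rs * u * s powr (\<rho> - 1) < g1"
proof -
  define a where "a = secrecy_threshold Rd Rs"
  have "0 < a" unfolding a_def using secrecy_threshold_pos[OF assms(1)] .
  have "a * u * s powr (\<rho> - 1) * s = a * u * s powr \<rho>"
    using assms(2) by (simp add: powr_diff)
  also have "\<dots> \<le> a * g2 * s powr \<rho>"
    using assms(4,5) \<open>0 < a\<close> by (intro mult_right_mono mult_left_mono) auto
  also have "\<dots> < g1 * s"
    using E_l_iff[of s g1 g2 "s powr \<rho>"] assms(2-6) \<open>0 < a\<close> unfolding a_def
    by (simp add: algebra_simps)
  finally show ?thesis using assms(2) unfolding a_def by simp
qed

lemma (in prob_space) exponential_distributed_AE_nonneg: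
  assumes "distributed M lborel X (exponential_density l)"
  shows "AE \<omega> in M. 0 \<le> X \<omega>"
  using assms by (subst distributed_AE2[OF assms]) (auto simp: exponential_density_def erlang_density_def)

lemma (in prob_space) exponential_distributed_prob_le_linear:
  assumes "distributed M lborel X (exponential_density l)" and "0 \<le> a" and "0 < l"
  shows "\<P>(\<omega> in M. X \<omega> \<le> a) \<le> a * l"
  using exponential_distributedD_le[OF assms] exp_ge_add_one_self[of "- a * l"] by simp

locale exponential_gains = prob_space M for M :: "'a measure" +
  fixes X1 X2 :: "'a \<Rightarrow> real" and l1 l2 :: real
  assumes rates_pos: "0 < l1" "0 < l2"
    and distributed_X1: "distributed M lborel X1 (exponential_density l1)"
    and distributed_X2: "distributed M lborel X2 (exponential_density l2)"
    and indep_gains: "indep_var borel X1 borel X2"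
begin

lemma measurable_gains [measurable]: "X1 \<in> borel_measurable M" "X2 \<in> borel_measurable M"
  using distributed_measurable[OF distributed_X1] distributed_measurable[OF distributed_X2] by simp_all

lemma AE_gains_nonneg: "AE \<omega> in M. 0 \<le> X1 \<omega> \<and> 0 \<le> X2 \<omega>"
  using exponential_distributed_AE_nonneg[OF distributed_X1]
    exponential_distributed_AE_nonneg[OF distributed_X2] by eventually_elim simp

end

locale relay_outage = exponential_gains +
  fixes Q :: "real \<Rightarrow> real \<Rightarrow> real \<Rightarrow> bool" and ka kb Rd Rs \<rho> :: real
  assumes ka_pos: "0 < ka" and kb_pos: "0 < kb" and rate_gap: "Rs < Rd"
    and outage_if_source_gain_small:
      "\<And>s g1 g2. 0 < s \<Longrightarrow> 0 \<le> g1 \<Longrightarrow> 0 \<le> g2 \<Longrightarrow> g1 < ka / s \<Longrightarrow> Q s g1 g2"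
    and min_gain_small_if_outage:
      "\<And>s g1 g2. 0 < s \<Longrightarrow> 0 \<le> g1 \<Longrightarrow> 0 \<le> g2 \<Longrightarrow> Q s g1 g2 \<Longrightarrow> min g1 g2 < kb / s"
    and measurable_outage [measurable]: "\<And>s. Measurable.pred M (\<lambda>\<omega>. Q s (X1 \<omega>) (X2 \<omega>))"
begin

definition total_outage :: "real \<Rightarrow> real" where
  "total_outage s = \<P>(\<omega> in M. Q s (X1 \<omega>) (X2 \<omega>) \<or> E_l Rd Rs s (s powr \<rho>) (X1 \<omega>) (X2 \<omega>))"

lemma total_outage_measurable [measurable]:
  "{\<omega> \<in> space M. Q s (X1 \<omega>) (X2 \<omega>) \<or> E_l Rd Rs s (s powr \<rho>) (X1 \<omega>) (X2 \<omega>)} \<in> sets M"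
  unfolding E_l_def by measurable

lemma total_outage_le_one: "total_outage s \<le> 1"
  unfolding total_outage_def by simp

lemma total_outage_ge_source_outage:
  assumes "0 < s" and "0 \<le> x" and "x < ka / s"
  shows "1 - exp (- x * l1) \<le> total_outage s"
proof -
  have "\<P>(\<omega> in M. X1 \<omega> \<le> x) \<le> total_outage s"
    unfolding total_outage_def
  proof (rule finite_measure_mono_AE[OF _ total_outage_measurable])
    show "AE \<omega> in M. \<omega> \<in> {\<omega> \<in> space M. X1 \<omega> \<le> x} \<longrightarrow>
        \<omega> \<in> {\<omega> \<in> space M. Q s (X1 \<omega>) (X2 \<omega>) \<or> E_l Rd Rs s (s powr \<rho>) (X1 \<omega>) (X2 \<omega>)}"
      using AE_gains_nonneg by eventually_elim (use assms outage_if_source_gain_small in auto)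
  qed
  then show ?thesis
    using exponential_distributedD_le[OF distributed_X1 \<open>0 \<le> x\<close> rates_pos(1)] by simp
qed

lemma total_outage_ge_leakage:
  assumes "1 \<le> s"
  shows "exp (- (2 * secrecy_threshold Rd Rs) * l1) * (1 - exp (- (s powr (1 - \<rho>)) * l2))
    \<le> total_outage s"
proof -
  define a where "a = secrecy_threshold Rd Rs"
  define t where "t = s powr (1 - \<rho>)"
  have "0 < a" unfolding a_def using secrecy_threshold_pos[OF rate_gap] .
  have "\<P>(\<omega> in M. X1 \<omega> \<in> {2 * a<..} \<and> X2 \<omega> \<in> {..t})
      = \<P>(\<omega> in M. X1 \<omega> \<in> {2 * a<..}) * \<P>(\<omega> in M. X2 \<omega> \<in> {..t})"
    by (rule prob_indep_random_variable[OF indep_gains]) simp_all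
  also have "\<dots> = exp (- (2 * a) * l1) * (1 - exp (- t * l2))"
    using exponential_distributedD_gt[OF distributed_X1 _ rates_pos(1), of "2 * a"]
      exponential_distributedD_le[OF distributed_X2 _ rates_pos(2), of t] \<open>0 < a\<close>
    by (simp add: t_def)
  finally have "exp (- (2 * a) * l1) * (1 - exp (- t * l2))
      = \<P>(\<omega> in M. 2 * a < X1 \<omega> \<and> X2 \<omega> \<le> t)" by simp
  also have "\<dots> \<le> total_outage s"
    unfolding total_outage_def
  proof (rule finite_measure_mono_AE[OF _ total_outage_measurable])
    show "AE \<omega> in M. \<omega> \<in> {\<omega> \<in> space M. 2 * a < X1 \<omega> \<and> X2 \<omega> \<le> t} \<longrightarrow>
        \<omega> \<in> {\<omega> \<in> space M. Q s (X1 \<omega>) (X2 \<omega>) \<or> E_l Rd Rs s (s powr \<rho>) (X1 \<omega>) (X2 \<omega>)}"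
      using AE_gains_nonneg
      by eventually_elim (use E_l_if_gains_separated[OF rate_gap assms] in \<open>auto simp: a_def t_def\<close>)
  qed
  finally show ?thesis unfolding a_def t_def .
qed

lemma total_outage_le_union_bound:
  assumes "0 < s" and "0 \<le> u"
  shows "total_outage s \<le> kb / s * l1 + kb / s * l2 + u * l2
    + exp (- (secrecy_threshold Rd Rs * u * s powr (\<rho> - 1)) * l1)"
proof -
  define v where "v = secrecy_threshold Rd Rs * u * s powr (\<rho> - 1)"
  have "0 \<le> v"
    unfolding v_def using secrecy_threshold_pos[OF rate_gap] assms by simp
  have "total_outage s \<le> \<P>(\<omega> in M. X1 \<omega> \<le> kb / s \<or> X2 \<omega> \<le> kb / s \<or> X2 \<omega> \<le> u \<or> v < X1 \<omega>)"
    unfolding total_outage_def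
  proof (rule finite_measure_mono_AE)
    show "AE \<omega> in M. \<omega> \<in> {\<omega> \<in> space M. Q s (X1 \<omega>) (X2 \<omega>) \<or> E_l Rd Rs s (s powr \<rho>) (X1 \<omega>) (X2 \<omega>)}
        \<longrightarrow> \<omega> \<in> {\<omega> \<in> space M. X1 \<omega> \<le> kb / s \<or> X2 \<omega> \<le> kb / s \<or> X2 \<omega> \<le> u \<or> v < X1 \<omega>}"
      using AE_gains_nonneg
    proof eventually_elim
      case (elim \<omega>)
      then show ?case
        using min_gain_small_if_outage[OF assms(1), of "X1 \<omega>" "X2 \<omega>"]
          source_gain_large_if_E_l[OF rate_gap assms(1) _ assms(2), of "X1 \<omega>" "X2 \<omega>"]
        unfolding v_def by (cases "X2 \<omega> \<le> u") (auto simp: min_def split: if_splits)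
    qed
  qed measurable
  also have "\<dots> \<le> \<P>(\<omega> in M. X1 \<omega> \<le> kb / s) + \<P>(\<omega> in M. X2 \<omega> \<le> kb / s)
      + \<P>(\<omega> in M. X2 \<omega> \<le> u) + \<P>(\<omega> in M. v < X1 \<omega>)"
  proof -
    have "{\<omega> \<in> space M. X1 \<omega> \<le> kb / s \<or> X2 \<omega> \<le> kb / s \<or> X2 \<omega> \<le> u \<or> v < X1 \<omega>}
        = {\<omega> \<in> space M. X1 \<omega> \<le> kb / s} \<union> {\<omega> \<in> space M. X2 \<omega> \<le> kb / s}
          \<union> {\<omega> \<in> space M. X2 \<omega> \<le> u} \<union> {\<omega> \<in> space M. v < X1 \<omega>}"
      by auto
    then show ?thesis
      by (simp only:) (intro order.trans[OF measure_Un_le] add_mono; measurable)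
  qed
  also have "\<dots> \<le> kb / s * l1 + kb / s * l2 + u * l2 + exp (- v * l1)"
    using exponential_distributed_prob_le_linear[OF distributed_X1 _ rates_pos(1), of "kb / s"]
      exponential_distributed_prob_le_linear[OF distributed_X2 _ rates_pos(2), of "kb / s"]
      exponential_distributed_prob_le_linear[OF distributed_X2 assms(2) rates_pos(2)]
      exponential_distributedD_gt[OF distributed_X1 \<open>0 \<le> v\<close> rates_pos(1)] assms kb_pos
    by simp
  finally show ?thesis unfolding v_def by simp
qed

lemma total_outage_ge_leakage_min:
  assumes "1 \<le> s"
  shows "exp (- (2 * secrecy_threshold Rd Rs) * l1) * (l2 / (1 + l2)) * min 1 (s powr (1 - \<rho>))
    \<le> total_outage s"
proof -
  define t where "t = s powr (1 - \<rho>)"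
  define y where "y = min 1 t * l2"
  have "0 \<le> y" and "y \<le> l2" and "y \<le> t * l2"
    unfolding y_def t_def using rates_pos by (auto intro: mult_right_mono)
  then have "y / (1 + l2) \<le> 1 - exp (- (t * l2))"
    using linear_le_one_minus_exp_neg[of y l2] by (smt (verit) exp_mono)
  then have "min 1 t * (l2 / (1 + l2)) \<le> 1 - exp (- t * l2)"
    unfolding y_def by simp
  then have "exp (- (2 * secrecy_threshold Rd Rs) * l1) * (min 1 t * (l2 / (1 + l2)))
      \<le> exp (- (2 * secrecy_threshold Rd Rs) * l1) * (1 - exp (- t * l2))"
    by (intro mult_left_mono) auto
  then show ?thesis
    using total_outage_ge_leakage[OF assms] unfolding t_def by (simp add: mult_ac)
qed

lemma eventually_total_outage_ge_inverse:
  "\<forall>\<^sub>F s in at_top. ka * l1 / 4 * (1 / s) \<le> total_outage s"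
  using eventually_ge_at_top[of "ka * l1 / 2"] eventually_gt_at_top[of 0]
proof eventually_elim
  case (elim s)
  define y where "y = ka / (2 * s) * l1"
  have "0 \<le> y" and "y \<le> 1" unfolding y_def using elim ka_pos rates_pos by (auto simp: field_simps)
  have "ka * l1 / 4 * (1 / s) = y / (1 + 1)"
    using elim unfolding y_def by (simp add: field_simps)
  also have "\<dots> \<le> 1 - exp (- y)" by (rule linear_le_one_minus_exp_neg[OF \<open>0 \<le> y\<close> \<open>y \<le> 1\<close>])
  also have "\<dots> \<le> total_outage s"
    using total_outage_ge_source_outage[of s "ka / (2 * s)"] elim ka_pos
    unfolding y_def by (simp add: field_simps)
  finally show ?case .
qed

lemma eventually_total_outage_ge:
  "\<exists>c>0. \<forall>\<^sub>F s in at_top. c * s powr (- gsdg \<rho>) \<le> total_outage s"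
proof (cases "\<rho> \<le> 2")
  case True
  define c where "c = exp (- (2 * secrecy_threshold Rd Rs) * l1) * (l2 / (1 + l2))"
  have "\<forall>\<^sub>F s in at_top. c * s powr (- gsdg \<rho>) \<le> total_outage s"
    using eventually_ge_at_top[of 1]
  proof eventually_elim
    case (elim s)
    have "s powr (- gsdg \<rho>) = min 1 (s powr (1 - \<rho>))"
    proof (cases "\<rho> \<le> 1")
      case True
      then show ?thesis using elim ge_one_powr_ge_zero[of s "1 - \<rho>"] by (simp add: gsdg_def)
    next
      case False
      then show ?thesis
        using elim \<open>\<rho> \<le> 2\<close> powr_mono[of "1 - \<rho>" 0 s] by (simp add: gsdg_def minus_diff_eq)
    qed
    then show ?case using total_outage_ge_leakage_min[OF elim] unfolding c_def by simp
  qed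
  moreover have "0 < c" unfolding c_def using rates_pos by simp
  ultimately show ?thesis by blast
next
  case False
  have "\<forall>\<^sub>F s in at_top. ka * l1 / 4 * s powr (- gsdg \<rho>) \<le> total_outage s"
    using eventually_total_outage_ge_inverse eventually_gt_at_top[of 0]
    by eventually_elim (use False in \<open>simp add: gsdg_def powr_minus_divide\<close>)
  moreover have "0 < ka * l1 / 4" using ka_pos rates_pos by simp
  ultimately show ?thesis by blast
qed

lemma total_outage_le_balanced:
  assumes "0 < s" and "1 \<le> ln s" and "0 \<le> \<rho>"
  shows "total_outage s \<le> kb * l1 * (1 / s) + kb * l2 * (1 / s)
    + \<rho> / (secrecy_threshold Rd Rs * l1) * l2 * (s powr (1 - \<rho>) * ln s) + s powr (- \<rho>)"
proof -
  define a where "a = secrecy_threshold Rd Rs"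
  have "0 < a" unfolding a_def using secrecy_threshold_pos[OF rate_gap] .
  define u where "u = \<rho> / (a * l1) * s powr (1 - \<rho>) * ln s"
  have "0 \<le> ln s" using assms(2) by linarith
  then have "0 \<le> u"
    unfolding u_def using assms(3) \<open>0 < a\<close> rates_pos by (intro mult_nonneg_nonneg) simp_all
  \<comment> \<open>This choice of \<open>u\<close> makes the secrecy term of the union bound exactly \<open>s powr (-\<rho>)\<close>.\<close>
  have "a * u * s powr (\<rho> - 1) * l1 = \<rho> * ln s"
    using \<open>0 < s\<close> \<open>0 < a\<close> rates_pos by (simp add: u_def powr_add[symmetric] field_simps)
  then have "exp (- (a * u * s powr (\<rho> - 1)) * l1) = s powr (- \<rho>)"
    using \<open>0 < s\<close> by (simp add: powr_def)
  then show ?thesis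
    using total_outage_le_union_bound[OF \<open>0 < s\<close> \<open>0 \<le> u\<close>]
    unfolding a_def u_def by (simp add: mult_ac)
qed

lemma eventually_total_outage_le:
  "\<exists>C>0. \<forall>\<^sub>F s in at_top. total_outage s \<le> C * s powr (- gsdg \<rho>) * ln s"
proof (cases "\<rho> \<le> 1")
  case True
  have "\<forall>\<^sub>F s in at_top. total_outage s \<le> 1 * s powr (- gsdg \<rho>) * ln s"
    using eventually_ge_at_top[of "exp 1"]
  proof eventually_elim
    case (elim s)
    then have "0 < s" and "1 \<le> ln s"
      using exp_one_leD[of s] by auto
    then show ?case using total_outage_le_one[of s] True by (simp add: gsdg_def)
  qed
  then show ?thesis by (intro exI[of _ 1]) simp
next
  case False
  define K where "K = \<rho> / (secrecy_threshold Rd Rs * l1)"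
  have "0 \<le> K" unfolding K_def using False secrecy_threshold_pos[OF rate_gap] rates_pos by simp
  have d: "gsdg \<rho> \<le> 1" "gsdg \<rho> \<le> \<rho> - 1" using False by (auto simp: gsdg_def)
  have "\<forall>\<^sub>F s in at_top.
      total_outage s \<le> (kb * l1 + kb * l2 + K * l2 + 1) * s powr (- gsdg \<rho>) * ln s"
    using eventually_ge_at_top[of "exp 1"]
  proof eventually_elim
    case (elim s)
    then have "0 < s" and "1 \<le> s" and "1 \<le> ln s"
      using exp_one_leD[of s] by auto
    have "1 / s \<le> s powr (- gsdg \<rho>) * ln s"
      using powr_neg_le_powr_neg_mult_ln[OF elim d(1)] \<open>0 < s\<close> by (simp add: powr_minus_divide)
    moreover have "s powr (1 - \<rho>) \<le> s powr (- gsdg \<rho>)"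
      using d(2) \<open>1 \<le> s\<close> by (intro powr_mono) auto
    moreover have "s powr (- \<rho>) \<le> s powr (- gsdg \<rho>) * ln s"
      using powr_neg_le_powr_neg_mult_ln[OF elim] d(2) by simp
    ultimately have "kb * l1 * (1 / s) + kb * l2 * (1 / s) + K * l2 * (s powr (1 - \<rho>) * ln s)
        + s powr (- \<rho>) \<le> kb * l1 * (s powr (- gsdg \<rho>) * ln s)
        + kb * l2 * (s powr (- gsdg \<rho>) * ln s) + K * l2 * (s powr (- gsdg \<rho>) * ln s)
        + s powr (- gsdg \<rho>) * ln s"
      using kb_pos rates_pos \<open>0 \<le> K\<close> \<open>1 \<le> ln s\<close>
      by (intro add_mono mult_left_mono mult_right_mono) auto
    also have "\<dots> = (kb * l1 + kb * l2 + K * l2 + 1) * s powr (- gsdg \<rho>) * ln s"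
      by (simp add: algebra_simps)
    finally show ?case
      using total_outage_le_balanced[OF \<open>0 < s\<close> \<open>1 \<le> ln s\<close>, folded K_def] False by linarith
  qed
  moreover have "0 < kb * l1 + kb * l2 + K * l2 + 1"
    using kb_pos rates_pos \<open>0 \<le> K\<close> by (simp add: add_pos_nonneg)
  ultimately show ?thesis by blast
qed

lemma Limsup_total_outage:
  "Limsup at_top (\<lambda>s. ereal (- ln (total_outage s) / ln s)) = ereal (gsdg \<rho>)"
proof -
  obtain c where "0 < c" and lower: "\<forall>\<^sub>F s in at_top. c * s powr (- gsdg \<rho>) \<le> total_outage s"
    using eventually_total_outage_ge by blast
  obtain C where "0 < C" and upper: "\<forall>\<^sub>F s in at_top. total_outage s \<le> C * s powr (- gsdg \<rho>) * ln s"
    using eventually_total_outage_le by blast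
  show ?thesis
    using Limsup_neg_ln_div_ln_eqI[OF \<open>0 < c\<close> \<open>0 < C\<close>] lower upper
    by (simp add: eventually_conj_iff)
qed

end

lemma relay_outage_E_o_MF:
  assumes "exponential_gains M X1 X2 l1 l2" and "Rs < Rd" and "0 \<le> Rs"
  shows "relay_outage M X1 X2 l1 l2 (E_o_MF Rd) (2 powr (2 * Rd) - 1) (2 * 2 powr (2 * Rd) - 1) Rd Rs"
proof -
  define c where "c = 2 powr (2 * Rd)"
  have "1 < c" unfolding c_def using assms(2,3) gr_one_powr[of 2 "2 * Rd"] by simp
  interpret exponential_gains M X1 X2 l1 l2 by (rule assms(1))
  show ?thesis
    unfolding c_def[symmetric]
  proof unfold_locales
    fix s g1 g2 :: real assume "0 < s" "0 \<le> g1" "0 \<le> g2"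
    then have hm: "s * (g1 * g2 / (g1 + g2)) \<le> s * g1" "s * min g1 g2 \<le> 2 * (s * (g1 * g2 / (g1 + g2)))"
      using prod_div_sum_le_left min_le_two_prod_div_sum
      unfolding mult.left_commute[of 2 s] by (intro mult_left_mono; simp)+
    show "E_o_MF Rd s g1 g2" if "g1 < (c - 1) / s"
    proof -
      have "s * g1 < c - 1" using that \<open>0 < s\<close> by (simp add: less_divide_eq mult.commute)
      then show ?thesis
        using E_o_MF_iff[OF \<open>0 < s\<close> \<open>0 \<le> g1\<close> \<open>0 \<le> g2\<close>, where Rd = Rd] hm(1) unfolding c_def by linarith
    qed
    show "min g1 g2 < (2 * c - 1) / s" if "E_o_MF Rd s g1 g2"
    proof -
      have "s * min g1 g2 < 2 * c - 1"
        using E_o_MF_iff[OF \<open>0 < s\<close> \<open>0 \<le> g1\<close> \<open>0 \<le> g2\<close>, where Rd = Rd] hm(2) that unfolding c_def by linarith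
      then show ?thesis using \<open>0 < s\<close> by (simp add: less_divide_eq mult.commute)
    qed
  next
    show "Measurable.pred M (\<lambda>\<omega>. E_o_MF Rd s (X1 \<omega>) (X2 \<omega>))" for s
      unfolding E_o_MF_def by measurable
  qed (use \<open>1 < c\<close> assms(2) in auto)
qed

lemma relay_outage_E_o_cs:
  assumes "exponential_gains M X1 X2 l1 l2" and "Rs < Rd" and "0 \<le> Rs"
  shows "relay_outage M X1 X2 l1 l2 (E_o_cs Rd) (2 powr (2 * Rd) - 1) (2 powr (2 * Rd) - 1) Rd Rs"
proof -
  have "1 < 2 powr (2 * Rd)" using assms(2,3) gr_one_powr[of 2 "2 * Rd"] by simp
  interpret exponential_gains M X1 X2 l1 l2 by (rule assms(1))
  show ?thesis
  proof unfold_locales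
    fix s g1 g2 :: real assume "0 < s" "0 \<le> g1" "0 \<le> g2"
    show "E_o_cs Rd s g1 g2" if "g1 < (2 powr (2 * Rd) - 1) / s"
    proof -
      have "min g1 g2 * s \<le> g1 * s" using \<open>0 < s\<close> by (intro mult_right_mono) auto
      also have "\<dots> < 2 powr (2 * Rd) - 1" using that \<open>0 < s\<close> by (simp add: less_divide_eq)
      finally show ?thesis using E_o_cs_iff[OF \<open>0 < s\<close> \<open>0 \<le> g1\<close> \<open>0 \<le> g2\<close>, where Rd = Rd] by simp
    qed
    show "min g1 g2 < (2 powr (2 * Rd) - 1) / s" if "E_o_cs Rd s g1 g2"
      using E_o_cs_iff[OF \<open>0 < s\<close> \<open>0 \<le> g1\<close> \<open>0 \<le> g2\<close>, where Rd = Rd] that \<open>0 < s\<close>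
      by (simp add: less_divide_eq)
  next
    show "Measurable.pred M (\<lambda>\<omega>. E_o_cs Rd s (X1 \<omega>) (X2 \<omega>))" for s
      unfolding E_o_cs_def by measurable
  qed (use \<open>1 < 2 powr (2 * Rd)\<close> assms(2) in auto)
qed

theorem theorem3:
  fixes M :: "'a measure" and X1 X2 :: "'a \<Rightarrow> real"
    and \<epsilon>1 \<epsilon>2 Rd Rs \<rho> :: real
  assumes "prob_space M"
    and "\<epsilon>1 > 0" and "\<epsilon>2 > 0"
    and "distributed M lborel X1 (exponential_density (1 / \<epsilon>1))"
    and "distributed M lborel X2 (exponential_density (1 / \<epsilon>2))"
    and "prob_space.indep_var M borel X1 borel X2"
    and "Rd > Rs" and "Rs \<ge> 0" and "\<rho> \<ge> 0"
  shows "Limsup at_top (\<lambda>snr. ereal (- ln (measure M {\<omega> \<in> space M.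
            E_o_MF Rd snr (X1 \<omega>) (X2 \<omega>) \<or> E_l Rd Rs snr (snr powr \<rho>) (X1 \<omega>) (X2 \<omega>)})
            / ln snr)) = ereal (gsdg \<rho>)
    \<and> Limsup at_top (\<lambda>snr. ereal (- ln (measure M {\<omega> \<in> space M.
            E_o_cs Rd snr (X1 \<omega>) (X2 \<omega>) \<or> E_l Rd Rs snr (snr powr \<rho>) (X1 \<omega>) (X2 \<omega>)})
            / ln snr)) = ereal (gsdg \<rho>)"
proof -
  have gains: "exponential_gains M X1 X2 (1 / \<epsilon>1) (1 / \<epsilon>2)"
    using assms(1-6) unfolding exponential_gains_def exponential_gains_axioms_def by simp
  have MF: "relay_outage M X1 X2 (1 / \<epsilon>1) (1 / \<epsilon>2) (E_o_MF Rd)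
      (2 powr (2 * Rd) - 1) (2 * 2 powr (2 * Rd) - 1) Rd Rs"
    by (rule relay_outage_E_o_MF[OF gains assms(7,8)])
  have cs: "relay_outage M X1 X2 (1 / \<epsilon>1) (1 / \<epsilon>2) (E_o_cs Rd)
      (2 powr (2 * Rd) - 1) (2 powr (2 * Rd) - 1) Rd Rs"
    by (rule relay_outage_E_o_cs[OF gains assms(7,8)])
  show ?thesis
    using relay_outage.Limsup_total_outage[OF MF, of \<rho>] relay_outage.Limsup_total_outage[OF cs, of \<rho>]
    unfolding relay_outage.total_outage_def[OF MF] relay_outage.total_outage_def[OF cs]
    by simp
qed

end
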